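(* Let $(R,\mathfrak m)$ be a one-dimensional Cohen–Macaulay local ring and let $I,J$ be regular ideals of $R$. Suppose there exists $q\in I$ with $IJ=qJ$. Then for every regular trace ideal $L$ of $R$ with $L\subseteq\mathrm{tr}_R(J)$, the equality $IL=qL$ holds.
   Context: An ideal is regular if it contains a non-zerodivisor. The trace ideal of an $R$-module $M$ is $\mathrm{tr}_R(M)=\sum_{f\in\mathrm{Hom}_R(M,R)}\mathrm{Im}f$; an ideal is a trace ideal if it equals $\mathrm{tr}_R(M)$ for some $M$. *)

theory Defs
  imports "HOL-Algebra.Algebra"
begin

definition nonzerodivisor :: "('a, 'b) ring_scheme \<Rightarrow> 'a \<Rightarrow> bool" where
  "nonzerodivisor R x \<longleftrightarrow> x \<in> carrier R \<and>
     (\<forall>y\<in>carrier R. x \<otimes>\<^bsub>R\<^esub> y = \<zero>\<^bsub>R\<^esub> \<longrightarrow> y = \<zero>\<^bsub>R\<^esub>)"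

definition regular_ideal :: "('a, 'b) ring_scheme \<Rightarrow> 'a set \<Rightarrow> bool" where
  "regular_ideal R I \<longleftrightarrow> ideal I R \<and> (\<exists>x\<in>I. nonzerodivisor R x)"

definition local_ring :: "('a, 'b) ring_scheme \<Rightarrow> 'a set \<Rightarrow> bool" where
  "local_ring R m \<longleftrightarrow> cring R \<and> maximalideal m R \<and>
     (\<forall>n. maximalideal n R \<longrightarrow> n = m)"

definition prime_chain :: "('a, 'b) ring_scheme \<Rightarrow> nat \<Rightarrow> (nat \<Rightarrow> 'a set) \<Rightarrow> bool" where
  "prime_chain R n P \<longleftrightarrow> (\<forall>i\<le>n. primeideal (P i) R) \<and> (\<forall>i<n. P i \<subset> P (Suc i))"

definition krull_dim_eq :: "('a, 'b) ring_scheme \<Rightarrow> nat \<Rightarrow> bool" where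
  "krull_dim_eq R n \<longleftrightarrow> (\<exists>P. prime_chain R n P) \<and> \<not> (\<exists>P. prime_chain R (Suc n) P)"

definition regular_sequence :: "('a, 'b) ring_scheme \<Rightarrow> 'a set \<Rightarrow> 'a list \<Rightarrow> bool" where
  "regular_sequence R m xs \<longleftrightarrow> set xs \<subseteq> m \<and>
     (\<forall>i<length xs. \<forall>y\<in>carrier R.
        (xs ! i) \<otimes>\<^bsub>R\<^esub> y \<in> Idl\<^bsub>R\<^esub> (set (take i xs)) \<longrightarrow> y \<in> Idl\<^bsub>R\<^esub> (set (take i xs))) \<and>
     Idl\<^bsub>R\<^esub> (set xs) \<noteq> carrier R"

definition depth_eq :: "('a, 'b) ring_scheme \<Rightarrow> 'a set \<Rightarrow> nat \<Rightarrow> bool" where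
  "depth_eq R m n \<longleftrightarrow> (\<exists>xs. regular_sequence R m xs \<and> length xs = n) \<and>
     \<not> (\<exists>xs. regular_sequence R m xs \<and> length xs = Suc n)"

definition one_dim_CM_local_ring :: "('a, 'b) ring_scheme \<Rightarrow> 'a set \<Rightarrow> bool" where
  "one_dim_CM_local_ring R m \<longleftrightarrow> noetherian_ring R \<and> local_ring R m \<and>
     krull_dim_eq R 1 \<and> depth_eq R m 1"

definition module_dual :: "('a, 'b) ring_scheme \<Rightarrow> ('a, 'm, 'c) module_scheme \<Rightarrow> ('m \<Rightarrow> 'a) set" where
  "module_dual R M = {f. f \<in> carrier M \<rightarrow> carrier R \<and>
     (\<forall>x\<in>carrier M. \<forall>y\<in>carrier M. f (x \<oplus>\<^bsub>M\<^esub> y) = f x \<oplus>\<^bsub>R\<^esub> f y) \<and>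
     (\<forall>a\<in>carrier R. \<forall>x\<in>carrier M. f (a \<odot>\<^bsub>M\<^esub> x) = a \<otimes>\<^bsub>R\<^esub> f x)}"

(* tr_R(M) = sum of the images of all f in Hom_R(M,R), i.e. the ideal they generate *)
definition trace_ideal :: "('a, 'b) ring_scheme \<Rightarrow> ('a, 'm, 'c) module_scheme \<Rightarrow> 'a set" where
  "trace_ideal R M = Idl\<^bsub>R\<^esub> (\<Union>f\<in>module_dual R M. f ` carrier M)"

definition ideal_module :: "('a, 'b) ring_scheme \<Rightarrow> 'a set \<Rightarrow> ('a, 'a) module" where
  "ideal_module R J = \<lparr> carrier = J, monoid.mult = monoid.mult R, monoid.one = monoid.one R,
     ring.zero = ring.zero R, ring.add = ring.add R, module.smult = monoid.mult R \<rparr>"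

end

theory Submission
  imports Defs
begin

text \<open>
  From a non-zerodivisor \<open>x \<in> I\<close> and \<open>y \<in> J\<close> we get \<open>x y \<in> IJ = qJ\<close>, so \<open>q\<close> is a
  non-zerodivisor. For \<open>i \<in> I\<close> we have \<open>iJ \<subseteq> qJ\<close>, and applying homomorphisms \<open>J \<rightarrow> R\<close>
  gives \<open>i tr(J) \<subseteq> qR\<close>. Hence on \<open>L \<subseteq> tr(J)\<close> the map \<open>l \<mapsto> il/q\<close> is a well-defined
  \<open>R\<close>-linear map \<open>L \<rightarrow> R\<close>; composing it with the homomorphisms \<open>M \<rightarrow> R\<close> whose images
  generate \<open>L = tr(M)\<close> shows that it maps \<open>L\<close> into \<open>L\<close>, i.e. \<open>iL \<subseteq> qL\<close>.
\<close>

lemma (in cring) ideal_mult_image: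
  assumes "ideal A R" and q: "q \<in> carrier R"
  shows "ideal ((\<lambda>a. q \<otimes> a) ` A) R"
proof -
  interpret A: ideal A R by fact
  show ?thesis
  proof (rule idealI[OF ring_axioms])
    show "subgroup ((\<lambda>a. q \<otimes> a) ` A) (add_monoid R)"
    proof (rule add.subgroupI)
      show "(\<lambda>a. q \<otimes> a) ` A \<subseteq> carrier R" using q A.Icarr by auto
      show "(\<lambda>a. q \<otimes> a) ` A \<noteq> {}" using A.zero_closed by blast
    next
      fix b assume "b \<in> (\<lambda>a. q \<otimes> a) ` A"
      then obtain a where "a \<in> A" "b = q \<otimes> a" by blast
      then show "\<ominus> b \<in> (\<lambda>a. q \<otimes> a) ` A"
        using q A.Icarr by (auto simp: r_minus[symmetric])
    next
      fix b c assume "b \<in> (\<lambda>a. q \<otimes> a) ` A" "c \<in> (\<lambda>a. q \<otimes> a) ` A"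
      then show "b \<oplus> c \<in> (\<lambda>a. q \<otimes> a) ` A"
        using q A.Icarr by (auto simp: r_distr[symmetric])
    qed
  next
    fix b x assume "b \<in> (\<lambda>a. q \<otimes> a) ` A" and x: "x \<in> carrier R"
    then obtain a where a: "a \<in> A" "b = q \<otimes> a" by blast
    have "x \<otimes> b = q \<otimes> (x \<otimes> a)" and "b \<otimes> x = x \<otimes> b"
      using a x q A.Icarr by (simp_all add: m_lcomm m_comm)
    moreover have "x \<otimes> a \<in> A" using a x by (simp add: A.I_l_closed)
    ultimately show "x \<otimes> b \<in> (\<lambda>a. q \<otimes> a) ` A" "b \<otimes> x \<in> (\<lambda>a. q \<otimes> a) ` A"
      by auto
  qed
qed

lemma (in cring) ideal_mult_preimage:
  assumes "ideal B R" and i: "i \<in> carrier R"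
  shows "ideal {l \<in> carrier R. i \<otimes> l \<in> B} R"
proof -
  interpret B: ideal B R by fact
  show ?thesis
  proof (rule idealI[OF ring_axioms])
    show "subgroup {l \<in> carrier R. i \<otimes> l \<in> B} (add_monoid R)"
    proof (rule add.subgroupI)
      have "\<zero> \<in> {l \<in> carrier R. i \<otimes> l \<in> B}" using i B.zero_closed by simp
      then show "{l \<in> carrier R. i \<otimes> l \<in> B} \<noteq> {}" by blast
    next
      fix a b assume "a \<in> {l \<in> carrier R. i \<otimes> l \<in> B}" "b \<in> {l \<in> carrier R. i \<otimes> l \<in> B}"
      then show "\<ominus> a \<in> {l \<in> carrier R. i \<otimes> l \<in> B}" "a \<oplus> b \<in> {l \<in> carrier R. i \<otimes> l \<in> B}"
        using i by (simp_all add: r_minus r_distr B.a_inv_closed B.a_closed)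
    qed blast
  next
    fix a x assume "a \<in> {l \<in> carrier R. i \<otimes> l \<in> B}" and x: "x \<in> carrier R"
    then have a: "a \<in> carrier R" "i \<otimes> a \<in> B" by simp_all
    have "i \<otimes> (x \<otimes> a) = x \<otimes> (i \<otimes> a)" by (rule m_lcomm[OF i x a(1)])
    then show xa: "x \<otimes> a \<in> {l \<in> carrier R. i \<otimes> l \<in> B}" using x a by (simp add: B.I_l_closed)
    then show "a \<otimes> x \<in> {l \<in> carrier R. i \<otimes> l \<in> B}" using m_comm[OF x a(1)] by simp
  qed
qed

lemma (in cring) nonzerodivisor_mult:
  assumes a: "nonzerodivisor R a" and b: "nonzerodivisor R b"
  shows "nonzerodivisor R (a \<otimes> b)"
  unfolding nonzerodivisor_def
proof (intro conjI ballI impI)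
  have ac: "a \<in> carrier R" and bc: "b \<in> carrier R"
    using a b unfolding nonzerodivisor_def by blast+
  then show "a \<otimes> b \<in> carrier R" by simp
  fix y assume y: "y \<in> carrier R" and "a \<otimes> b \<otimes> y = \<zero>"
  then have "a \<otimes> (b \<otimes> y) = \<zero>" using ac bc by (simp add: m_assoc)
  then have "b \<otimes> y = \<zero>" using a bc y unfolding nonzerodivisor_def by blast
  then show "y = \<zero>" using b y unfolding nonzerodivisor_def by blast
qed

lemma (in cring) nonzerodivisor_factor:
  assumes "nonzerodivisor R (a \<otimes> b)" and a: "a \<in> carrier R" and b: "b \<in> carrier R"
  shows "nonzerodivisor R a"
  unfolding nonzerodivisor_def
proof (intro conjI ballI impI a)
  fix y assume y: "y \<in> carrier R" and "a \<otimes> y = \<zero>"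
  moreover have "a \<otimes> b \<otimes> y = b \<otimes> (a \<otimes> y)" using a b y by (simp add: m_assoc m_lcomm[OF a b y])
  ultimately have "a \<otimes> b \<otimes> y = \<zero>" using b by simp
  then show "y = \<zero>" using assms(1) y unfolding nonzerodivisor_def by blast
qed

lemma (in ring) nonzerodivisor_cancel:
  assumes q: "nonzerodivisor R q" and a: "a \<in> carrier R" and b: "b \<in> carrier R"
    and "q \<otimes> a = q \<otimes> b"
  shows "a = b"
proof -
  have "q \<in> carrier R" using q unfolding nonzerodivisor_def by blast
  then have "q \<otimes> (a \<ominus> b) = \<zero>"
    using a b \<open>q \<otimes> a = q \<otimes> b\<close> by (simp add: minus_eq r_distr r_minus r_neg)
  then have "a \<ominus> b = \<zero>" using q a b unfolding nonzerodivisor_def by blast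
  then show ?thesis using a b r_right_minus_eq by blast
qed

lemma (in ring) module_dual_apply_in_trace_ideal:
  assumes "f \<in> module_dual R M" and "z \<in> carrier M"
  shows "f z \<in> trace_ideal R M"
  using assms unfolding trace_ideal_def genideal_def by blast

lemma (in ring) trace_ideal_is_ideal: "ideal (trace_ideal R M) R"
  unfolding trace_ideal_def by (rule genideal_ideal) (auto simp: module_dual_def)

lemma (in ring) trace_ideal_minimal:
  assumes "ideal B R" and "\<And>f z. f \<in> module_dual R M \<Longrightarrow> z \<in> carrier M \<Longrightarrow> f z \<in> B"
  shows "trace_ideal R M \<subseteq> B"
  unfolding trace_ideal_def using assms by (intro genideal_minimal) auto

lemma (in ring) module_dual_comp:
  assumes "f \<in> module_dual R M" and "f ` carrier M \<subseteq> A"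
    and "g \<in> module_dual R (ideal_module R A)"
  shows "g \<circ> f \<in> module_dual R M"
  using assms by (auto simp: module_dual_def ideal_module_def Pi_def image_subset_iff)

lemma (in cring) module_dual_divided_mult:
  assumes "ideal A R" and q: "nonzerodivisor R q" and i: "i \<in> carrier R"
    and \<phi>: "\<And>l. l \<in> A \<Longrightarrow> \<phi> l \<in> carrier R \<and> q \<otimes> \<phi> l = i \<otimes> l"
  shows "\<phi> \<in> module_dual R (ideal_module R A)"
proof -
  interpret A: ideal A R by fact
  have qc: "q \<in> carrier R" using q unfolding nonzerodivisor_def by blast
  have add: "\<phi> (a \<oplus> b) = \<phi> a \<oplus> \<phi> b" if "a \<in> A" "b \<in> A" for a b
  proof (rule nonzerodivisor_cancel[OF q])
    show "q \<otimes> \<phi> (a \<oplus> b) = q \<otimes> (\<phi> a \<oplus> \<phi> b)"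
      using that \<phi> qc i A.Icarr A.a_closed by (simp add: r_distr)
  qed (use that \<phi> A.a_closed in auto)
  have smult: "\<phi> (x \<otimes> a) = x \<otimes> \<phi> a" if "x \<in> carrier R" "a \<in> A" for x a
  proof (rule nonzerodivisor_cancel[OF q])
    have "q \<otimes> \<phi> (x \<otimes> a) = i \<otimes> (x \<otimes> a)" using that \<phi> A.I_l_closed by simp
    also have "\<dots> = x \<otimes> (i \<otimes> a)" using that i A.Icarr by (simp add: m_lcomm)
    also have "\<dots> = x \<otimes> (q \<otimes> \<phi> a)" using that \<phi> by simp
    also have "\<dots> = q \<otimes> (x \<otimes> \<phi> a)" using that \<phi> qc by (intro m_lcomm) auto
    finally show "q \<otimes> \<phi> (x \<otimes> a) = q \<otimes> (x \<otimes> \<phi> a)" .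
  qed (use that \<phi> A.I_l_closed in auto)
  show ?thesis
    using \<phi> add smult by (auto simp: module_dual_def ideal_module_def)
qed

lemma (in cring) trace_ideal_module_mult_subset:
  assumes "ideal J R" and i: "i \<in> carrier R" and q: "q \<in> carrier R"
    and iJ: "(\<lambda>j. i \<otimes> j) ` J \<subseteq> (\<lambda>j. q \<otimes> j) ` J"
  shows "(\<lambda>l. i \<otimes> l) ` trace_ideal R (ideal_module R J) \<subseteq> (\<lambda>r. q \<otimes> r) ` carrier R"
proof -
  interpret J: ideal J R by fact
  have "trace_ideal R (ideal_module R J) \<subseteq> {l \<in> carrier R. i \<otimes> l \<in> (\<lambda>r. q \<otimes> r) ` carrier R}"
  proof (rule trace_ideal_minimal)
    show "ideal {l \<in> carrier R. i \<otimes> l \<in> (\<lambda>r. q \<otimes> r) ` carrier R} R"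
      using ideal_mult_preimage[OF ideal_mult_image[OF oneideal q] i] .
  next
    fix f j assume f: "f \<in> module_dual R (ideal_module R J)"
      and "j \<in> carrier (ideal_module R J)"
    then have j: "j \<in> J" by (simp add: ideal_module_def)
    have fc: "f a \<in> carrier R" and fs: "f (x \<otimes> a) = x \<otimes> f a" if "a \<in> J" "x \<in> carrier R" for a x
      using f that by (auto simp: module_dual_def ideal_module_def)
    obtain j' where j': "j' \<in> J" "i \<otimes> j = q \<otimes> j'" using iJ j by blast
    have "i \<otimes> f j = q \<otimes> f j'"
      using fs[OF j i] fs[OF j'(1) q] j'(2) by simp
    then show "f j \<in> {l \<in> carrier R. i \<otimes> l \<in> (\<lambda>r. q \<otimes> r) ` carrier R}"
      using fc[OF j i] fc[OF j'(1) q] by auto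
  qed
  then show ?thesis by blast
qed

lemma (in cring) trace_ideal_mult_subset:
  assumes q: "nonzerodivisor R q" and i: "i \<in> carrier R"
    and iL: "(\<lambda>l. i \<otimes> l) ` trace_ideal R M \<subseteq> (\<lambda>r. q \<otimes> r) ` carrier R"
  shows "(\<lambda>l. i \<otimes> l) ` trace_ideal R M \<subseteq> (\<lambda>l. q \<otimes> l) ` trace_ideal R M"
proof -
  let ?L = "trace_ideal R M"
  have qc: "q \<in> carrier R" using q unfolding nonzerodivisor_def by blast
  have divisible: "\<forall>l\<in>?L. \<exists>r. r \<in> carrier R \<and> q \<otimes> r = i \<otimes> l"
    using iL by (force simp: image_subset_iff)
  obtain \<phi> where \<phi>: "\<And>l. l \<in> ?L \<Longrightarrow> \<phi> l \<in> carrier R \<and> q \<otimes> \<phi> l = i \<otimes> l"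
    using bchoice[OF divisible] by blast
  then have \<phi>_dual: "\<phi> \<in> module_dual R (ideal_module R ?L)"
    using module_dual_divided_mult[OF trace_ideal_is_ideal q i] by blast
  have "?L \<subseteq> {l \<in> carrier R. i \<otimes> l \<in> (\<lambda>l. q \<otimes> l) ` ?L}"
  proof (rule trace_ideal_minimal)
    show "ideal {l \<in> carrier R. i \<otimes> l \<in> (\<lambda>l. q \<otimes> l) ` ?L} R"
      using ideal_mult_preimage[OF ideal_mult_image[OF trace_ideal_is_ideal qc] i] .
  next
    fix f z assume f: "f \<in> module_dual R M" and z: "z \<in> carrier M"
    have fL: "f ` carrier M \<subseteq> ?L" using module_dual_apply_in_trace_ideal[OF f] by blast
    have "\<phi> (f z) \<in> ?L"
      using module_dual_apply_in_trace_ideal[OF module_dual_comp[OF f fL \<phi>_dual] z] by simp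
    moreover have "f z \<in> ?L" using fL z by blast
    ultimately show "f z \<in> {l \<in> carrier R. i \<otimes> l \<in> (\<lambda>l. q \<otimes> l) ` ?L}"
      using \<phi> ideal.Icarr[OF trace_ideal_is_ideal]
      by (metis (mono_tags, lifting) image_eqI mem_Collect_eq)
  qed
  then show ?thesis by blast
qed

lemma (in cring) ideal_prod_eq_mult_image:
  assumes I: "ideal I R" and L: "ideal L R" and q: "q \<in> I"
    and iL: "\<And>i. i \<in> I \<Longrightarrow> (\<lambda>l. i \<otimes> l) ` L \<subseteq> (\<lambda>l. q \<otimes> l) ` L"
  shows "I \<cdot> L = (\<lambda>l. q \<otimes> l) ` L"
proof
  interpret qL: ideal "(\<lambda>l. q \<otimes> l) ` L" R
    using ideal_mult_image[OF L ideal.Icarr[OF I q]] .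
  show "I \<cdot> L \<subseteq> (\<lambda>l. q \<otimes> l) ` L"
  proof
    fix s assume "s \<in> I \<cdot> L"
    then show "s \<in> (\<lambda>l. q \<otimes> l) ` L"
    proof (induct s rule: ideal_prod.induct)
      case (prod i l)
      then show ?case using iL by blast
    next
      case (sum s1 s2)
      then show ?case by (simp add: qL.a_closed)
    qed
  qed
  show "(\<lambda>l. q \<otimes> l) ` L \<subseteq> I \<cdot> L"
    using ideal_prod.prod[OF q] by blast
qed

theorem lemma2p4:
  fixes R :: "'a ring" and m I J L :: "'a set" and q :: 'a
    and M :: "('a, 'm) module"
  assumes "one_dim_CM_local_ring R m"
    and "regular_ideal R I" and "regular_ideal R J"
    and "q \<in> I"
    and "ideal_prod R I J = (\<lambda>j. q \<otimes>\<^bsub>R\<^esub> j) ` J"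
    and "module R M" and "L = trace_ideal R M"
    and "regular_ideal R L"
    and "L \<subseteq> trace_ideal R (ideal_module R J)"
  shows "ideal_prod R I L = (\<lambda>l. q \<otimes>\<^bsub>R\<^esub> l) ` L"
proof -
  interpret cring R
    using assms(1) unfolding one_dim_CM_local_ring_def local_ring_def by blast
  have I: "ideal I R" and J: "ideal J R"
    using assms(2,3) unfolding regular_ideal_def by blast+
  have qc: "q \<in> carrier R" using ideal.Icarr[OF I assms(4)] .
  have IJ: "(\<lambda>j. i \<otimes>\<^bsub>R\<^esub> j) ` J \<subseteq> (\<lambda>j. q \<otimes>\<^bsub>R\<^esub> j) ` J" if "i \<in> I" for i
    using that ideal_prod.prod[of i I _ J R] assms(5) by blast
  have "nonzerodivisor R q"
  proof -
    obtain x y where "x \<in> I" "y \<in> J" "nonzerodivisor R x" "nonzerodivisor R y"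
      using assms(2,3) unfolding regular_ideal_def by blast
    moreover from this obtain j where "j \<in> J" "x \<otimes>\<^bsub>R\<^esub> y = q \<otimes>\<^bsub>R\<^esub> j" using IJ by blast
    ultimately show ?thesis
      using nonzerodivisor_factor nonzerodivisor_mult qc ideal.Icarr[OF J] by metis
  qed
  moreover have "(\<lambda>l. i \<otimes>\<^bsub>R\<^esub> l) ` L \<subseteq> (\<lambda>r. q \<otimes>\<^bsub>R\<^esub> r) ` carrier R" if "i \<in> I" for i
    using trace_ideal_module_mult_subset[OF J _ qc IJ[OF that]] ideal.Icarr[OF I that] assms(9) by blast
  ultimately have "(\<lambda>l. i \<otimes>\<^bsub>R\<^esub> l) ` L \<subseteq> (\<lambda>l. q \<otimes>\<^bsub>R\<^esub> l) ` L" if "i \<in> I" for i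
    using trace_ideal_mult_subset ideal.Icarr[OF I that] that unfolding assms(7) by blast
  then show ?thesis
    using ideal_prod_eq_mult_image[OF I trace_ideal_is_ideal assms(4)] assms(7) by blast
qed

end
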